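(* Let $\varepsilon>0$, $\alpha=\varepsilon/(2M)$, $\lambda=2\alpha/(\alpha+\sqrt{\alpha^2+4L\alpha})$, and $y_0\in\mathrm{dom}\, h$. Run TAA: $s_0=\nabla f(y_0)$, $x_0=\mathrm{argmin}_x\{\langle s_0,x\rangle+h^\alpha(x)\}$, and for $k\ge0$: $\tilde x_{k+1}=(1-\lambda)y_k+\lambda x_k$, $s_{k+1}=(1-\lambda)s_k+\lambda\nabla f(\tilde x_{k+1})$, $x_{k+1}=\mathrm{argmin}_x\{\langle s_{k+1},x\rangle+h^\alpha(x)\}$, $y_{k+1}=(1-\lambda)y_k+\lambda x_{k+1}$. Let $\Gamma_k$ be the ACP model induced by $(y_0,\{\tilde x_{i+1}\}_{i=0}^{k-1},(\lambda,\dots,\lambda))$. Then $(y_k,\Gamma_k)$ is an $\varepsilon$-certificate for $\min_x\phi(x)$ after $k=\tilde{\mathcal{O}}(1+\sqrt{ML/\varepsilon})$ iterations.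
   Context: Let $\|\cdot\|$ be a norm on $\mathbb{R}^n$ with dual norm $\|\cdot\|_*$. Let $f:\mathbb{R}^n\to\mathbb{R}$ be convex, differentiable and $L$-smooth ($L>0$) with respect to $\|\cdot\|$, $h:\mathbb{R}^n\to(-\infty,\infty]$ closed proper convex with bounded domain, and $w:\mathbb{R}^n\to[0,+\infty]$ closed, $1$-strongly convex with respect to $\|\cdot\|$ on $\mathrm{dom}\, h$, with $M:=\max_{x\in\mathrm{dom}\, h}w(x)<\infty$. Let $\phi=f+h$, $h^\alpha=h+\alpha w$, $\phi^\alpha=f+h^\alpha$. Write $\ell_f(x;x_0)=f(x_0)+\langle\nabla f(x_0),x-x_0\rangle$. The ACP model induced by $(y_0,\{p_i\}_{i=0}^{k-1},\zeta)$, $\zeta\in[0,1]^k$, is defined by $\Gamma_0(x)=h^\alpha(x)+\ell_f(x;y_0)$, $\Gamma_{j+1}(x)=(1-\zeta_j)\Gamma_j(x)+\zeta_j(h^\alpha(x)+\ell_f(x;p_j))$. For $u\in\mathrm{dom}\, h$ and $\alpha\le\varepsilon/(2M)$, $(u,\Gamma_k)$ is an $\varepsilon$-certificate if $\phi^\alpha(u)-\min_{x\in\mathbb{R}^n}\Gamma_k(x)\le\varepsilon/2$. The notation $\tilde{\mathcal{O}}$ hides logarithmic factors (in $\varepsilon$ and the initial gap). *)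

theory Defs
  imports "HOL-Analysis.Analysis" "HOL-Library.Extended_Real"
begin

definition edom :: "('a \<Rightarrow> ereal) \<Rightarrow> 'a set" where
  "edom g = {x. g x < \<infinity>}"

definition is_norm :: "('a::real_vector \<Rightarrow> real) \<Rightarrow> bool" where
  "is_norm N \<longleftrightarrow> (\<forall>x. 0 \<le> N x) \<and> (\<forall>x. N x = 0 \<longleftrightarrow> x = 0)
     \<and> (\<forall>c x. N (c *\<^sub>R x) = \<bar>c\<bar> * N x) \<and> (\<forall>x y. N (x + y) \<le> N x + N y)"

definition dual_norm :: "('a::real_inner \<Rightarrow> real) \<Rightarrow> 'a \<Rightarrow> real" where
  "dual_norm N s = Sup {s \<bullet> x | x. N x \<le> 1}"

definition L_smooth_wrt :: "('a::real_inner \<Rightarrow> real) \<Rightarrow> real \<Rightarrow> ('a \<Rightarrow> 'a) \<Rightarrow> bool" where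
  "L_smooth_wrt N L G \<longleftrightarrow> (\<forall>x y. dual_norm N (G x - G y) \<le> L * N (x - y))"

definition econvex :: "('a::real_vector \<Rightarrow> ereal) \<Rightarrow> bool" where
  "econvex g \<longleftrightarrow> (\<forall>x y t. 0 \<le> t \<and> t \<le> 1 \<longrightarrow>
      g ((1 - t) *\<^sub>R x + t *\<^sub>R y) \<le> ereal (1 - t) * g x + ereal t * g y)"

definition eproper :: "('a \<Rightarrow> ereal) \<Rightarrow> bool" where
  "eproper g \<longleftrightarrow> (\<forall>x. g x \<noteq> -\<infinity>) \<and> (\<exists>x. g x < \<infinity>)"

definition eclosed :: "('a::topological_space \<Rightarrow> ereal) \<Rightarrow> bool" where
  "eclosed g \<longleftrightarrow> closed {(x, t::real). g x \<le> ereal t}"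

definition strongly_convex_wrt_on :: "'a set \<Rightarrow> ('a::real_vector \<Rightarrow> real) \<Rightarrow> ('a \<Rightarrow> ereal) \<Rightarrow> bool" where
  "strongly_convex_wrt_on D N w \<longleftrightarrow> (\<forall>x\<in>D. \<forall>y\<in>D. \<forall>t. 0 \<le> t \<and> t \<le> 1 \<longrightarrow>
      w ((1 - t) *\<^sub>R x + t *\<^sub>R y) + ereal (t * (1 - t) / 2 * (N (x - y))\<^sup>2)
        \<le> ereal (1 - t) * w x + ereal t * w y)"

definition halpha :: "('a \<Rightarrow> ereal) \<Rightarrow> ('a \<Rightarrow> ereal) \<Rightarrow> real \<Rightarrow> 'a \<Rightarrow> ereal" where
  "halpha h w \<alpha> x = h x + ereal \<alpha> * w x"

definition phialpha :: "('a \<Rightarrow> real) \<Rightarrow> ('a \<Rightarrow> ereal) \<Rightarrow> ('a \<Rightarrow> ereal) \<Rightarrow> real \<Rightarrow> 'a \<Rightarrow> ereal" where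
  "phialpha f h w \<alpha> x = ereal (f x) + halpha h w \<alpha> x"

definition lin :: "('a::real_inner \<Rightarrow> real) \<Rightarrow> ('a \<Rightarrow> 'a) \<Rightarrow> 'a \<Rightarrow> 'a \<Rightarrow> real" where
  "lin f G x0 x = f x0 + G x0 \<bullet> (x - x0)"

text \<open>argmin_x { <s,x> + H x } (unique in the setting of the theorem).\<close>
definition lin_argmin :: "('a::real_inner \<Rightarrow> ereal) \<Rightarrow> 'a \<Rightarrow> 'a" where
  "lin_argmin H s = (SOME x. \<forall>z. ereal (s \<bullet> x) + H x \<le> ereal (s \<bullet> z) + H z)"

text \<open>TAA iterates: taa ... k = (xtilde_k, s_k, x_k, y_k); xtilde_0 is unused (set to y_0).\<close>
primrec taa :: "('a::real_inner \<Rightarrow> ereal) \<Rightarrow> ('a \<Rightarrow> 'a) \<Rightarrow> real \<Rightarrow> 'a \<Rightarrow> nat \<Rightarrow> 'a \<times> 'a \<times> 'a \<times> 'a" where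
  "taa H G lam y0 0 = (y0, G y0, lin_argmin H (G y0), y0)"
| "taa H G lam y0 (Suc k) =
     (let (xt, s, x, y) = taa H G lam y0 k;
          xt' = (1 - lam) *\<^sub>R y + lam *\<^sub>R x;
          s' = (1 - lam) *\<^sub>R s + lam *\<^sub>R G xt';
          x' = lin_argmin H s';
          y' = (1 - lam) *\<^sub>R y + lam *\<^sub>R x'
      in (xt', s', x', y'))"

primrec acp :: "('a::real_inner \<Rightarrow> ereal) \<Rightarrow> ('a \<Rightarrow> real) \<Rightarrow> ('a \<Rightarrow> 'a) \<Rightarrow> 'a \<Rightarrow> (nat \<Rightarrow> 'a)
                 \<Rightarrow> (nat \<Rightarrow> real) \<Rightarrow> nat \<Rightarrow> 'a \<Rightarrow> ereal" where
  "acp H f G y0 p \<zeta> 0 x = H x + ereal (lin f G y0 x)"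
| "acp H f G y0 p \<zeta> (Suc j) x =
     ereal (1 - \<zeta> j) * acp H f G y0 p \<zeta> j x + ereal (\<zeta> j) * (H x + ereal (lin f G (p j) x))"

definition eps_certificate ::
  "('a \<Rightarrow> real) \<Rightarrow> ('a \<Rightarrow> ereal) \<Rightarrow> ('a \<Rightarrow> ereal) \<Rightarrow> real \<Rightarrow> real \<Rightarrow> real \<Rightarrow> 'a \<Rightarrow> ('a \<Rightarrow> ereal) \<Rightarrow> bool" where
  "eps_certificate f h w M \<alpha> \<epsilon> u \<Gamma> \<longleftrightarrow>
     u \<in> edom h \<and> \<alpha> \<le> \<epsilon> / (2 * M) \<and>
     phialpha f h w \<alpha> u - (INF x. \<Gamma> x) \<le> ereal (\<epsilon> / 2)"

end

theory Submission
  imports Defs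
begin

(* Write Gamma_k = h^alpha + l_k, where l_k is an affine minorant of f whose slope is s_k; then x_k
   minimizes Gamma_k, and since h^alpha is alpha-strongly convex, Gamma_k grows at least like
   alpha/2 ||x - x_k||^2 away from x_k.  The gap D_k = phi^alpha(y_k) - min Gamma_k contracts by
   the factor 1 - lambda in each step: the descent lemma at xtilde_(k+1) costs
   L/2 ||y_(k+1) - xtilde_(k+1)||^2 = L lambda^2/2 ||x_(k+1) - x_k||^2, and the quadratic growth of
   Gamma_k pays for it exactly because lambda solves L lambda^2 = alpha (1 - lambda).  Hence
   D_k <= (1 - lambda)^k D_0 <= eps/2 once k >= (1 + ln (1 + D_0/eps)) / lambda, and
   1/lambda <= 1 + sqrt (L/alpha) = 1 + sqrt (2 M L/eps). *)

section \<open>Norms and smooth functions\<close>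

lemma is_norm_nonneg: "is_norm N \<Longrightarrow> 0 \<le> N x"
  and is_norm_eq_zero_iff: "is_norm N \<Longrightarrow> N x = 0 \<longleftrightarrow> x = 0"
  and is_norm_scaleR: "is_norm N \<Longrightarrow> N (c *\<^sub>R x) = \<bar>c\<bar> * N x"
  and is_norm_triangle: "is_norm N \<Longrightarrow> N (x + y) \<le> N x + N y"
  unfolding is_norm_def by blast+

lemma is_norm_zero: "is_norm N \<Longrightarrow> N 0 = 0"
  using is_norm_eq_zero_iff by blast

lemma is_norm_pos: "is_norm N \<Longrightarrow> x \<noteq> 0 \<Longrightarrow> 0 < N x"
  using is_norm_nonneg is_norm_eq_zero_iff by (metis less_eq_real_def)

lemma is_norm_minus_commute: "is_norm N \<Longrightarrow> N (x - y) = N (y - x)"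
  using is_norm_scaleR[of N "-1" "y - x"] by simp

lemma is_norm_convex_on: "is_norm N \<Longrightarrow> convex_on UNIV N"
proof (rule convex_onI)
  fix t :: real and x y assume N: "is_norm N" and t: "0 < t" "t < 1"
  have "N ((1 - t) *\<^sub>R x + t *\<^sub>R y) \<le> N ((1 - t) *\<^sub>R x) + N (t *\<^sub>R y)"
    by (rule is_norm_triangle[OF N])
  also have "\<dots> = (1 - t) * N x + t * N y"
    using t by (simp add: is_norm_scaleR[OF N])
  finally show "N ((1 - t) *\<^sub>R x + t *\<^sub>R y) \<le> (1 - t) * N x + t * N y" .
qed simp

lemma is_norm_ge_norm:
  fixes N :: "'a::euclidean_space \<Rightarrow> real"
  assumes N: "is_norm N"
  obtains c where "0 < c" "\<And>x. c * norm x \<le> N x"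
proof -
  have "sphere (0::'a) 1 \<noteq> {}"
    using vector_choose_size[of 1] by auto
  moreover have "continuous_on (sphere 0 1) N"
    using convex_on_continuous[OF open_UNIV is_norm_convex_on[OF N]] continuous_on_subset by blast
  ultimately obtain z where z: "z \<in> sphere 0 1" "\<And>y. y \<in> sphere 0 1 \<Longrightarrow> N z \<le> N y"
    using continuous_attains_inf[OF compact_sphere] by blast
  have "N z * norm x \<le> N x" for x
  proof (cases "x = 0")
    case False
    then have "N z \<le> N ((1 / norm x) *\<^sub>R x)" by (intro z(2)) simp
    then show ?thesis using False by (simp add: is_norm_scaleR[OF N] field_simps)
  qed (simp add: is_norm_zero[OF N])
  moreover have "0 < N z" using z(1) by (intro is_norm_pos[OF N]) auto
  ultimately show thesis using that by blast
qed

lemma inner_le_dual_norm: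
  fixes N :: "'a::euclidean_space \<Rightarrow> real"
  assumes N: "is_norm N"
  shows "s \<bullet> v \<le> dual_norm N s * N v"
proof -
  obtain c where c: "0 < c" "\<And>x. c * norm x \<le> N x" using is_norm_ge_norm[OF N] by blast
  have "s \<bullet> x \<le> norm s / c" if "N x \<le> 1" for x
  proof -
    have "c * norm x \<le> 1" using c(2)[of x] that by linarith
    then have "norm x \<le> 1 / c" using c(1) by (simp add: field_simps mult.commute)
    then have "norm s * norm x \<le> norm s * (1 / c)" by (rule mult_left_mono) simp
    then show ?thesis using norm_cauchy_schwarz[of s x] by (simp add: order_trans)
  qed
  then have bdd: "bdd_above {s \<bullet> x | x. N x \<le> 1}" by (intro bdd_aboveI[of _ "norm s / c"]) blast
  have unit: "s \<bullet> x \<le> dual_norm N s" if "N x \<le> 1" for x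
    unfolding dual_norm_def using that by (intro cSup_upper[OF _ bdd]) blast
  show ?thesis
  proof (cases "v = 0")
    case True
    then show ?thesis using unit[of 0] by (simp add: is_norm_zero[OF N])
  next
    case False
    then have Nv: "0 < N v" by (rule is_norm_pos[OF N])
    then have "s \<bullet> ((1 / N v) *\<^sub>R v) \<le> dual_norm N s"
      by (intro unit) (simp add: is_norm_scaleR[OF N])
    then show ?thesis using Nv by (simp add: field_simps)
  qed
qed

lemma L_smooth_inner_le:
  fixes N :: "'a::euclidean_space \<Rightarrow> real"
  assumes N: "is_norm N" and smooth: "L_smooth_wrt N L G"
  shows "(G x - G y) \<bullet> v \<le> L * N (x - y) * N v"
proof -
  have "(G x - G y) \<bullet> v \<le> dual_norm N (G x - G y) * N v" by (rule inner_le_dual_norm[OF N])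
  also have "\<dots> \<le> L * N (x - y) * N v"
    using smooth unfolding L_smooth_wrt_def by (intro mult_right_mono is_norm_nonneg[OF N]) auto
  finally show ?thesis .
qed

lemma has_real_derivative_along_line:
  assumes "\<forall>x. (f has_derivative (\<lambda>v. G x \<bullet> v)) (at x)"
  shows "((\<lambda>t. f (x + t *\<^sub>R d)) has_real_derivative G (x + t *\<^sub>R d) \<bullet> d) (at t within A)"
proof -
  have "((\<lambda>t. x + t *\<^sub>R d) has_derivative (\<lambda>u. u *\<^sub>R d)) (at t within A)"
    by (auto intro!: derivative_eq_intros)
  then have "((\<lambda>t. f (x + t *\<^sub>R d)) has_derivative (\<lambda>u. G (x + t *\<^sub>R d) \<bullet> (u *\<^sub>R d))) (at t within A)"
    using has_derivative_compose assms by blast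
  then show ?thesis
    by (rule has_derivative_imp_has_field_derivative) (simp add: algebra_simps)
qed

lemma L_smooth_quadratic_upper_bound:
  fixes f :: "'a::euclidean_space \<Rightarrow> real"
  assumes N: "is_norm N" and smooth: "L_smooth_wrt N L G"
    and deriv: "\<forall>x. (f has_derivative (\<lambda>v. G x \<bullet> v)) (at x)"
  shows "f y \<le> f x + G x \<bullet> (y - x) + L / 2 * (N (y - x))\<^sup>2"
proof -
  define d where "d = y - x"
  define g where "g t = f (x + t *\<^sub>R d) - t * (G x \<bullet> d) - L / 2 * t\<^sup>2 * (N d)\<^sup>2" for t
  have "g 1 \<le> g 0"
  proof (rule DERIV_nonpos_imp_nonincreasing[of 0 1 g])
    fix t :: real assume t: "0 \<le> t" "t \<le> 1"
    have "(G (x + t *\<^sub>R d) - G x) \<bullet> d \<le> L * N (t *\<^sub>R d) * N d"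
      using L_smooth_inner_le[OF N smooth] by (metis add_diff_cancel_left')
    then have "G (x + t *\<^sub>R d) \<bullet> d - G x \<bullet> d - L * t * (N d)\<^sup>2 \<le> 0"
      using t by (simp add: is_norm_scaleR[OF N] inner_diff_left power2_eq_square mult.assoc)
    moreover have "(g has_real_derivative G (x + t *\<^sub>R d) \<bullet> d - G x \<bullet> d - L * t * (N d)\<^sup>2) (at t)"
      unfolding g_def by (rule derivative_eq_intros has_real_derivative_along_line[OF deriv] | simp)+
    ultimately show "\<exists>y. (g has_real_derivative y) (at t) \<and> y \<le> 0" by blast
  qed simp
  then show ?thesis unfolding g_def d_def by simp
qed

lemma convex_on_gradient_inequality:
  fixes f :: "'a::real_inner \<Rightarrow> real"
  assumes convex: "convex_on UNIV f"
    and deriv: "\<forall>x. (f has_derivative (\<lambda>v. G x \<bullet> v)) (at x)"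
  shows "f x + G x \<bullet> (y - x) \<le> f y"
proof -
  define g where "g t = f (x + t *\<^sub>R (y - x))" for t
  have "convex_on UNIV g"
  proof (rule convex_onI)
    fix a t u :: real assume "0 < a" "a < 1"
    have "x + ((1 - a) * t + a * u) *\<^sub>R (y - x)
        = (1 - a) *\<^sub>R (x + t *\<^sub>R (y - x)) + a *\<^sub>R (x + u *\<^sub>R (y - x))"
      by (simp add: algebra_simps)
    then show "g ((1 - a) *\<^sub>R t + a *\<^sub>R u) \<le> (1 - a) * g t + a * g u"
      unfolding g_def using convex_onD[OF convex] \<open>0 < a\<close> \<open>a < 1\<close> by simp
  qed simp
  moreover have "(g has_real_derivative G x \<bullet> (y - x)) (at 0 within UNIV)"
    unfolding g_def using has_real_derivative_along_line[OF deriv, of x "y - x" 0] by simp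
  ultimately have "g 1 - g 0 \<ge> G x \<bullet> (y - x) * (1 - 0)"
    by (intro convex_on_imp_above_tangent) auto
  then show ?thesis unfolding g_def by simp
qed

section \<open>Closed extended-real functions\<close>

lemma eclosed_le_limit:
  assumes "eclosed g" "\<And>n. g (z n) \<le> ereal (u n)" "z \<longlonglongrightarrow> x" "u \<longlonglongrightarrow> t"
  shows "g x \<le> ereal t"
proof -
  have "(x, t) \<in> {(x, t). g x \<le> ereal t}"
    by (rule Lim_in_closed_set[OF assms(1)[unfolded eclosed_def], of "\<lambda>n. (z n, u n)"])
       (use assms(2) tendsto_Pair[OF assms(3,4)] in auto)
  then show ?thesis by simp
qed

lemma eclosed_bounded_below:
  fixes g :: "'a::heine_borel \<Rightarrow> ereal"
  assumes closed: "eclosed g" and proper: "eproper g" and bounded: "bounded (edom g)"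
  obtains B where "\<And>x. ereal B \<le> g x"
proof (rule ccontr)
  assume "\<not> thesis"
  have "\<exists>x. g x < ereal (- real n)" for n :: nat
  proof (rule ccontr)
    assume "\<nexists>x. g x < ereal (- real n)"
    then have "\<And>x. ereal (- real n) \<le> g x" using leI by blast
    with that \<open>\<not> thesis\<close> show False by blast
  qed
  then obtain z where z: "\<And>n. g (z n) < ereal (- real n)" by metis
  have "g (z n) < \<infinity>" for n
    using z[of n] by (rule order.strict_trans) simp
  then have "range z \<subseteq> edom g"
    unfolding edom_def by blast
  then obtain l r where r: "strict_mono r" "(z \<circ> r) \<longlonglongrightarrow> l"
    using bounded_imp_convergent_subsequence bounded_subset[OF bounded] by blast
  have "g l \<le> ereal t" for t
  proof -
    obtain n0 :: nat where n0: "- t \<le> real n0" using real_arch_simple by blast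
    have "g (z (r (n + n0))) \<le> ereal t" for n
    proof -
      have "real n0 \<le> real (r (n + n0))" using seq_suble[OF r(1), of "n + n0"] by simp
      then have "ereal (- real (r (n + n0))) \<le> ereal t" using n0 by simp
      then show ?thesis using z[of "r (n + n0)"] by (meson order.strict_implies_order order.strict_trans2)
    qed
    moreover have "(\<lambda>n. z (r (n + n0))) \<longlonglongrightarrow> l"
      using LIMSEQ_ignore_initial_segment[OF r(2)] by (simp add: o_def)
    ultimately show ?thesis
      using eclosed_le_limit[OF closed, of "\<lambda>n. z (r (n + n0))" "\<lambda>_. t"] by blast
  qed
  then have "g l = -\<infinity>" by (rule ereal_bot)
  with proper show False unfolding eproper_def by blast
qed

section \<open>Strong convexity\<close>

definition strongly_convex_on ::
    "'a set \<Rightarrow> ('a::real_vector \<Rightarrow> real) \<Rightarrow> real \<Rightarrow> ('a \<Rightarrow> real) \<Rightarrow> bool" where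
  "strongly_convex_on D N \<mu> \<phi> \<longleftrightarrow> (\<forall>x\<in>D. \<forall>y\<in>D. \<forall>t. 0 \<le> t \<and> t \<le> 1 \<longrightarrow>
      (1 - t) *\<^sub>R x + t *\<^sub>R y \<in> D \<and>
      \<phi> ((1 - t) *\<^sub>R x + t *\<^sub>R y) + \<mu> * (t * (1 - t) / 2 * (N (x - y))\<^sup>2)
        \<le> (1 - t) * \<phi> x + t * \<phi> y)"

lemma strongly_convex_on_minimizer_growth:
  assumes sc: "strongly_convex_on D N \<mu> \<phi>" and x: "x \<in> D" and z: "z \<in> D"
    and min: "\<And>y. y \<in> D \<Longrightarrow> \<phi> x + s \<bullet> x \<le> \<phi> y + s \<bullet> y"
  shows "\<phi> x + s \<bullet> x + \<mu> / 2 * (N (x - z))\<^sup>2 \<le> \<phi> z + s \<bullet> z"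
proof -
  have bound: "(1 - t) * (\<mu> / 2 * (N (x - z))\<^sup>2) \<le> \<phi> z + s \<bullet> z - (\<phi> x + s \<bullet> x)"
    if t: "0 < t" "t < 1" for t
  proof -
    let ?m = "(1 - t) *\<^sub>R x + t *\<^sub>R z"
    have "?m \<in> D"
      and "\<phi> ?m + \<mu> * (t * (1 - t) / 2 * (N (x - z))\<^sup>2) \<le> (1 - t) * \<phi> x + t * \<phi> z"
      using sc x z t unfolding strongly_convex_on_def by auto
    moreover have "s \<bullet> ?m = (1 - t) * (s \<bullet> x) + t * (s \<bullet> z)" by (simp add: inner_simps)
    ultimately have
      "t * ((1 - t) * (\<mu> / 2 * (N (x - z))\<^sup>2)) \<le> t * (\<phi> z + s \<bullet> z - (\<phi> x + s \<bullet> x))"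
      using min[of ?m] by (simp add: algebra_simps)
    then show ?thesis using t by simp
  qed
  have "\<mu> / 2 * (N (x - z))\<^sup>2 \<le> \<phi> z + s \<bullet> z - (\<phi> x + s \<bullet> x)"
  proof (rule field_le_mult_one_interval)
    fix c :: real assume "0 < c" "c < 1"
    then show "c * (\<mu> / 2 * (N (x - z))\<^sup>2) \<le> \<phi> z + s \<bullet> z - (\<phi> x + s \<bullet> x)"
      using bound[of "1 - c"] by simp
  qed
  then show ?thesis by simp
qed

lemma strongly_convex_on_imp_le:
  assumes "strongly_convex_on D N \<mu> \<phi>" "0 \<le> \<mu>" "x \<in> D" "y \<in> D" "0 \<le> t" "t \<le> 1"
  shows "\<phi> ((1 - t) *\<^sub>R x + t *\<^sub>R y) \<le> (1 - t) * \<phi> x + t * \<phi> y"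
proof -
  have "\<phi> ((1 - t) *\<^sub>R x + t *\<^sub>R y) + \<mu> * (t * (1 - t) / 2 * (N (x - y))\<^sup>2) \<le> (1 - t) * \<phi> x + t * \<phi> y"
    using assms unfolding strongly_convex_on_def by blast
  moreover have "0 \<le> \<mu> * (t * (1 - t) / 2 * (N (x - y))\<^sup>2)" using assms(2,5,6) by simp
  ultimately show ?thesis by linarith
qed

section \<open>Convergence of TAA\<close>

(* lam is the positive root of L lam^2 = alpha (1 - lam), written without cancellation. *)
lemma taa_step_size:
  fixes \<alpha> L :: real
  assumes "0 < \<alpha>" "0 < L"
  defines "lam \<equiv> 2 * \<alpha> / (\<alpha> + sqrt (\<alpha>\<^sup>2 + 4 * L * \<alpha>))"
  shows "0 < lam" "lam < 1" "L * lam\<^sup>2 = \<alpha> * (1 - lam)" "1 / lam \<le> 1 + sqrt (L / \<alpha>)"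
proof -
  define q where "q = sqrt (\<alpha>\<^sup>2 + 4 * L * \<alpha>)"
  have q2: "q\<^sup>2 = \<alpha>\<^sup>2 + 4 * L * \<alpha>" unfolding q_def using assms by simp
  have "\<alpha> < q" unfolding q_def using assms by (intro real_less_rsqrt) simp
  have lam: "lam = 2 * \<alpha> / (\<alpha> + q)" unfolding lam_def q_def ..
  show "0 < lam" "lam < 1" unfolding lam using assms \<open>\<alpha> < q\<close> by simp_all
  have lam_q: "lam * (\<alpha> + q) = 2 * \<alpha>" unfolding lam using assms \<open>\<alpha> < q\<close> by simp
  have "L * lam\<^sup>2 * (\<alpha> + q)\<^sup>2 = L * (lam * (\<alpha> + q))\<^sup>2" by (simp add: power_mult_distrib)
  also have "\<dots> = 4 * L * \<alpha>\<^sup>2" unfolding lam_q by (simp add: power2_eq_square)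
  also have "\<dots> = \<alpha> * (q\<^sup>2 - \<alpha>\<^sup>2)" unfolding q2 by (simp add: power2_eq_square algebra_simps)
  also have "\<dots> = \<alpha> * (1 - lam) * (\<alpha> + q)\<^sup>2"
    unfolding lam using assms \<open>\<alpha> < q\<close> by (simp add: power2_eq_square field_simps)
  finally have "L * lam\<^sup>2 * (\<alpha> + q)\<^sup>2 = \<alpha> * (1 - lam) * (\<alpha> + q)\<^sup>2" .
  then show "L * lam\<^sup>2 = \<alpha> * (1 - lam)" using assms \<open>\<alpha> < q\<close> by simp
  have "sqrt (L * \<alpha>) = \<alpha> * sqrt (L / \<alpha>)"
    using assms real_sqrt_mult[of "\<alpha>\<^sup>2" "L / \<alpha>"] by (simp add: power2_eq_square mult.commute)
  moreover have "q \<le> \<alpha> + 2 * sqrt (L * \<alpha>)"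
    unfolding q_def using assms by (intro real_le_lsqrt) (auto simp: power2_eq_square algebra_simps)
  ultimately have "(\<alpha> + q) / (2 * \<alpha>) \<le> 1 + sqrt (L / \<alpha>)"
    using assms by (simp add: field_simps)
  then show "1 / lam \<le> 1 + sqrt (L / \<alpha>)" unfolding lam by simp
qed

lemma geometric_decay_le_half:
  fixes lam \<epsilon> g :: real
  assumes lam: "0 < lam" "lam < 1" and \<epsilon>: "0 < \<epsilon>" and k: "(1 + ln (1 + g / \<epsilon>)) / lam \<le> real k"
  shows "(1 - lam) ^ k * g \<le> \<epsilon> / 2"
proof (cases "g \<le> 0")
  case True
  then have "(1 - lam) ^ k * g \<le> 0" using lam by (simp add: mult_nonneg_nonpos)
  then show ?thesis using \<epsilon> by linarith
next
  case False
  then have pos: "0 < 1 + g / \<epsilon>" using \<epsilon> by (simp add: add_pos_pos)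
  have "ln (2 * (1 + g / \<epsilon>)) \<le> 1 + ln (1 + g / \<epsilon>)"
    using pos ln_2_less_1 ln_mult[of 2 "1 + g / \<epsilon>"] by simp
  also have "\<dots> \<le> lam * real k" using k lam by (simp add: field_simps)
  finally have ln_le: "ln (2 * (1 + g / \<epsilon>)) \<le> lam * real k" .
  have "(1 - lam) ^ k \<le> exp (- lam) ^ k"
    using lam exp_ge_add_one_self[of "- lam"] by (intro power_mono) auto
  also have "\<dots> = exp (- (lam * real k))" by (simp add: exp_of_nat_mult[symmetric] mult.commute)
  also have "\<dots> \<le> exp (- ln (2 * (1 + g / \<epsilon>)))" using ln_le by simp
  also have "\<dots> = \<epsilon> / (2 * (\<epsilon> + g))" using pos \<epsilon> by (simp add: exp_minus field_simps)
  finally have "(1 - lam) ^ k * g \<le> \<epsilon> / (2 * (\<epsilon> + g)) * g"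
    using False by (intro mult_right_mono) auto
  also have "\<dots> \<le> \<epsilon> / 2" using False \<epsilon> by (simp add: field_simps)
  finally show ?thesis .
qed

primrec lin_model :: "('a::real_inner \<Rightarrow> real) \<Rightarrow> ('a \<Rightarrow> 'a) \<Rightarrow> 'a \<Rightarrow> (nat \<Rightarrow> 'a)
                       \<Rightarrow> (nat \<Rightarrow> real) \<Rightarrow> nat \<Rightarrow> 'a \<Rightarrow> real" where
  "lin_model f G y0 p \<zeta> 0 x = lin f G y0 x"
| "lin_model f G y0 p \<zeta> (Suc j) x = (1 - \<zeta> j) * lin_model f G y0 p \<zeta> j x + \<zeta> j * lin f G (p j) x"

lemma acp_eq_add_lin_model:
  assumes "H x \<noteq> -\<infinity>" and "\<And>j. 0 \<le> \<zeta> j \<and> \<zeta> j \<le> 1"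
  shows "acp H f G y0 p \<zeta> k x = H x + ereal (lin_model f G y0 p \<zeta> k x)"
proof (induction k)
  case (Suc k)
  show ?case
  proof (cases "H x")
    case (real r)
    then show ?thesis using Suc by (simp add: algebra_simps)
  next
    case PInf
    then show ?thesis using Suc assms(2)[of k] by (cases "\<zeta> k = 1") (auto simp: ereal_mult_infty)
  qed (use assms(1) in simp)
qed simp

locale taa_setting =
  fixes N :: "'a::euclidean_space \<Rightarrow> real" and f :: "'a \<Rightarrow> real" and G :: "'a \<Rightarrow> 'a"
    and h w :: "'a \<Rightarrow> ereal" and L M \<alpha> :: real and y0 :: 'a
  assumes N: "is_norm N" and f_convex: "convex_on UNIV f"
    and f_deriv: "\<forall>x. (f has_derivative (\<lambda>v. G x \<bullet> v)) (at x)"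
    and L_pos: "0 < L" and smooth: "L_smooth_wrt N L G"
    and h_closed: "eclosed h" and h_proper: "eproper h" and h_convex: "econvex h"
    and h_bounded: "bounded (edom h)"
    and w_nonneg: "\<forall>x. 0 \<le> w x" and w_closed: "eclosed w"
    and w_strongly_convex: "strongly_convex_wrt_on (edom h) N w"
    and w_le_M: "\<forall>x\<in>edom h. w x \<le> ereal M" and \<alpha>_pos: "0 < \<alpha>" and y0: "y0 \<in> edom h"
begin

abbreviation "D \<equiv> edom h"
abbreviation "H \<equiv> halpha h w \<alpha>"

definition "hr x = real_of_ereal (h x)"
definition "wr x = real_of_ereal (w x)"
definition "Hr x = hr x + \<alpha> * wr x"

lemma h_real: "x \<in> D \<Longrightarrow> h x = ereal (hr x)"
  using h_proper unfolding edom_def eproper_def hr_def by (cases "h x") auto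

lemma w_real: "x \<in> D \<Longrightarrow> w x = ereal (wr x)"
  using w_le_M w_nonneg unfolding wr_def by (cases "w x") auto

lemma wr_nonneg: "0 \<le> wr x"
  using w_nonneg unfolding wr_def by (metis real_of_ereal_pos)

lemma wr_le_M: "x \<in> D \<Longrightarrow> wr x \<le> M"
  using w_le_M w_real by fastforce

lemma H_real: "x \<in> D \<Longrightarrow> H x = ereal (Hr x)"
  unfolding halpha_def Hr_def using h_real w_real by simp

lemma H_outside: "x \<notin> D \<Longrightarrow> H x = \<infinity>"
proof -
  assume "x \<notin> D"
  then have "h x = \<infinity>" unfolding edom_def by simp
  moreover have "0 \<le> ereal \<alpha> * w x" using w_nonneg \<alpha>_pos by simp
  ultimately show ?thesis unfolding halpha_def by auto
qed

lemma H_not_MInf: "H x \<noteq> -\<infinity>"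
  by (cases "x \<in> D") (simp_all add: H_real H_outside)

lemma convex_combination_in_dom:
  assumes "x \<in> D" "y \<in> D" "0 \<le> t" "t \<le> 1"
  shows "(1 - t) *\<^sub>R x + t *\<^sub>R y \<in> D \<and> hr ((1 - t) *\<^sub>R x + t *\<^sub>R y) \<le> (1 - t) * hr x + t * hr y"
proof -
  have "h ((1 - t) *\<^sub>R x + t *\<^sub>R y) \<le> ereal (1 - t) * h x + ereal t * h y"
    using h_convex assms(3,4) unfolding econvex_def by blast
  also have "\<dots> = ereal ((1 - t) * hr x + t * hr y)" using h_real assms(1,2) by simp
  finally have le: "h ((1 - t) *\<^sub>R x + t *\<^sub>R y) \<le> ereal ((1 - t) * hr x + t * hr y)" .
  then have "(1 - t) *\<^sub>R x + t *\<^sub>R y \<in> D"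
    unfolding edom_def using le_less_trans[OF le ereal_less_PInfty] by simp
  with le show ?thesis using h_real by fastforce
qed

lemma Hr_strongly_convex: "strongly_convex_on D N \<alpha> Hr"
  unfolding strongly_convex_on_def
proof (intro ballI allI impI conjI)
  fix x y and t :: real assume x: "x \<in> D" and y: "y \<in> D" and t: "0 \<le> t \<and> t \<le> 1"
  let ?m = "(1 - t) *\<^sub>R x + t *\<^sub>R y"
  have m: "?m \<in> D" and hr: "hr ?m \<le> (1 - t) * hr x + t * hr y"
    using convex_combination_in_dom x y t by auto
  then show "?m \<in> D" by blast
  have "w ?m + ereal (t * (1 - t) / 2 * (N (x - y))\<^sup>2) \<le> ereal (1 - t) * w x + ereal t * w y"
    using w_strongly_convex x y t unfolding strongly_convex_wrt_on_def by blast
  then have "wr ?m + t * (1 - t) / 2 * (N (x - y))\<^sup>2 \<le> (1 - t) * wr x + t * wr y"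
    using w_real x y m by simp
  then have "\<alpha> * (wr ?m + t * (1 - t) / 2 * (N (x - y))\<^sup>2) \<le> \<alpha> * ((1 - t) * wr x + t * wr y)"
    using \<alpha>_pos by (intro mult_left_mono) auto
  with hr show "Hr ?m + \<alpha> * (t * (1 - t) / 2 * (N (x - y))\<^sup>2) \<le> (1 - t) * Hr x + t * Hr y"
    unfolding Hr_def by (simp add: algebra_simps)
qed

lemma compact_joint_epigraph:
  "compact {(x, a, b). h x \<le> ereal a \<and> w x \<le> ereal b \<and> a \<le> U \<and> b \<le> M}" (is "compact ?K")
proof -
  obtain B where B: "\<And>x. ereal B \<le> h x"
    using eclosed_bounded_below[OF h_closed h_proper h_bounded] by blast
  have "?K = (\<lambda>p. (fst p, fst (snd p))) -` {(x, a). h x \<le> ereal a}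
      \<inter> (\<lambda>p. (fst p, snd (snd p))) -` {(x, b). w x \<le> ereal b}
      \<inter> {p. fst (snd p) \<le> U} \<inter> {p. snd (snd p) \<le> M}"
    by auto
  moreover have "closed \<dots>"
    using h_closed w_closed unfolding eclosed_def
    by (intro closed_Int continuous_closed_vimage closed_Collect_le) (auto intro!: continuous_intros)
  moreover have "?K \<subseteq> D \<times> {B..U} \<times> {0..M}"
  proof safe
    fix x a b assume ha: "h x \<le> ereal a" and wb: "w x \<le> ereal b" and "a \<le> U" "b \<le> M"
    have "ereal B \<le> ereal a" using B[of x] ha by (rule order_trans)
    moreover have "0 \<le> ereal b" using w_nonneg wb by (blast intro: order_trans)
    ultimately show "a \<in> {B..U}" "b \<in> {0..M}" using \<open>a \<le> U\<close> \<open>b \<le> M\<close> by auto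
    show "x \<in> D" unfolding edom_def using le_less_trans[OF ha ereal_less_PInfty] by simp
  qed
  then have "bounded ?K"
    by (rule bounded_subset[OF bounded_Times[OF h_bounded
          bounded_Times[OF bounded_closed_interval bounded_closed_interval]]])
  ultimately show ?thesis by (simp add: compact_eq_bounded_closed)
qed

(* Minimize the continuous function (x, a, b) |-> s.x + a + alpha b over the compact set of triples
   with h x <= a and w x <= b; the cap a <= U loses nothing, because every z with hr z > U is worse
   than y0. *)
lemma exists_argmin:
  obtains x where "x \<in> D" "\<And>z. z \<in> D \<Longrightarrow> Hr x + s \<bullet> x \<le> Hr z + s \<bullet> z"
proof -
  obtain R where R: "\<And>x. x \<in> D \<Longrightarrow> norm x \<le> R" using h_bounded unfolding bounded_iff by blast
  have s_ge: "- (norm s * R) \<le> s \<bullet> x" if "x \<in> D" for x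
    using Cauchy_Schwarz_ineq2[of s x] mult_left_mono[OF R[OF that] norm_ge_zero[of s]] by linarith
  define U where "U = Hr y0 + s \<bullet> y0 + norm s * R"
  define K where "K = {(x, a, b). h x \<le> ereal a \<and> w x \<le> ereal b \<and> a \<le> U \<and> b \<le> M}"
  define F where "F p = s \<bullet> fst p + fst (snd p) + \<alpha> * snd (snd p)" for p :: "'a \<times> real \<times> real"
  have F_le: "Hr z + s \<bullet> z \<le> F (z, a, b)" if "(z, a, b) \<in> K" for z a b
  proof -
    have "z \<in> D" using that unfolding K_def edom_def using le_less_trans[OF _ ereal_less_PInfty] by auto
    then have "hr z \<le> a" "wr z \<le> b" using that h_real w_real unfolding K_def by auto
    moreover have "\<alpha> * wr z \<le> \<alpha> * b" using \<open>wr z \<le> b\<close> \<alpha>_pos by simp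
    ultimately show ?thesis unfolding F_def Hr_def by simp
  qed
  have in_K: "(z, hr z, wr z) \<in> K" if "z \<in> D" "hr z \<le> U" for z
    using that h_real w_real wr_le_M unfolding K_def by auto
  have "hr y0 \<le> U" unfolding U_def Hr_def using s_ge[OF y0] wr_nonneg[of y0] \<alpha>_pos by simp
  then have "K \<noteq> {}" using in_K[OF y0] by blast
  moreover have "continuous_on K F" unfolding F_def by (intro continuous_intros)
  ultimately obtain p where "p \<in> K" and p_min: "\<And>q. q \<in> K \<Longrightarrow> F p \<le> F q"
    using continuous_attains_inf[OF compact_joint_epigraph[of U, folded K_def]] by blast
  then obtain l u v where luv: "p = (l, u, v)" "(l, u, v) \<in> K" by (cases p) auto
  then have "l \<in> D" unfolding K_def edom_def using le_less_trans[OF _ ereal_less_PInfty] by auto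
  moreover have "Hr l + s \<bullet> l \<le> Hr z + s \<bullet> z" if "z \<in> D" for z
  proof (cases "hr z \<le> U")
    case True
    then have "F p \<le> Hr z + s \<bullet> z" using p_min[OF in_K[OF that]] unfolding F_def Hr_def by simp
    then show ?thesis using F_le[OF luv(2)] luv(1) by simp
  next
    case False
    have "F p \<le> Hr y0 + s \<bullet> y0"
      using p_min[OF in_K[OF y0 \<open>hr y0 \<le> U\<close>]] unfolding F_def Hr_def by simp
    also have "\<dots> < hr z + s \<bullet> z" using False s_ge[OF that] unfolding U_def by simp
    also have "\<dots> \<le> Hr z + s \<bullet> z" using wr_nonneg[of z] \<alpha>_pos unfolding Hr_def by simp
    finally have "F p \<le> Hr z + s \<bullet> z" by simp
    then show ?thesis using F_le[OF luv(2)] luv(1) by simp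
  qed
  ultimately show thesis using that by blast
qed

lemma lin_argmin_minimizes: "ereal (s \<bullet> lin_argmin H s) + H (lin_argmin H s) \<le> ereal (s \<bullet> z) + H z"
proof -
  obtain x where x: "x \<in> D" "\<And>z. z \<in> D \<Longrightarrow> Hr x + s \<bullet> x \<le> Hr z + s \<bullet> z"
    using exists_argmin by blast
  have "\<forall>z. ereal (s \<bullet> x) + H x \<le> ereal (s \<bullet> z) + H z"
  proof
    fix z show "ereal (s \<bullet> x) + H x \<le> ereal (s \<bullet> z) + H z"
      using x H_real H_outside[of z] by (cases "z \<in> D") (simp_all add: add.commute)
  qed
  then have "\<forall>z. ereal (s \<bullet> lin_argmin H s) + H (lin_argmin H s) \<le> ereal (s \<bullet> z) + H z"
    unfolding lin_argmin_def by (rule someI)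
  then show ?thesis by blast
qed

lemma lin_argmin_in_dom: "lin_argmin H s \<in> D"
proof (rule ccontr)
  assume "lin_argmin H s \<notin> D"
  then show False
    using lin_argmin_minimizes[of s y0] H_outside H_real[OF y0] by simp
qed

lemma lin_argmin_le: "z \<in> D \<Longrightarrow> Hr (lin_argmin H s) + s \<bullet> lin_argmin H s \<le> Hr z + s \<bullet> z"
  using lin_argmin_minimizes[of s z] H_real[OF lin_argmin_in_dom] H_real by (simp add: add.commute)

definition "lam = 2 * \<alpha> / (\<alpha> + sqrt (\<alpha>\<^sup>2 + 4 * L * \<alpha>))"

lemma lam_pos: "0 < lam" and lam_less_1: "lam < 1" and L_lam_sq: "L * lam\<^sup>2 = \<alpha> * (1 - lam)"
  and inverse_lam_le: "1 / lam \<le> 1 + sqrt (L / \<alpha>)"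
  using taa_step_size[OF \<alpha>_pos L_pos] unfolding lam_def by auto

definition "xt k = fst (taa H G lam y0 k)"
definition "sk k = fst (snd (taa H G lam y0 k))"
definition "xk k = fst (snd (snd (taa H G lam y0 k)))"
definition "yk k = snd (snd (snd (taa H G lam y0 k)))"

lemma taa_0: "sk 0 = G y0" "xk 0 = lin_argmin H (sk 0)" "yk 0 = y0"
  by (simp_all add: sk_def xk_def yk_def)

lemma taa_Suc:
  "xt (Suc k) = (1 - lam) *\<^sub>R yk k + lam *\<^sub>R xk k"
  "sk (Suc k) = (1 - lam) *\<^sub>R sk k + lam *\<^sub>R G (xt (Suc k))"
  "xk (Suc k) = lin_argmin H (sk (Suc k))"
  "yk (Suc k) = (1 - lam) *\<^sub>R yk k + lam *\<^sub>R xk (Suc k)"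
  by (simp_all add: xt_def sk_def xk_def yk_def Let_def split: prod.splits)

lemma xk_eq: "xk k = lin_argmin H (sk k)"
  by (cases k) (simp_all add: taa_0 taa_Suc)

lemma xk_in_dom: "xk k \<in> D"
  unfolding xk_eq by (rule lin_argmin_in_dom)

lemma yk_in_dom: "yk k \<in> D"
proof (induction k)
  case (Suc k)
  then show ?case
    using convex_combination_in_dom[OF Suc xk_in_dom[of "Suc k"]] lam_pos lam_less_1
    unfolding taa_Suc(4) by simp
qed (simp add: taa_0 y0)

abbreviation "model \<equiv> lin_model f G y0 (\<lambda>i. xt (Suc i)) (\<lambda>_. lam)"
abbreviation "\<Gamma> \<equiv> acp H f G y0 (\<lambda>i. xt (Suc i)) (\<lambda>_. lam)"

lemma \<Gamma>_eq: "\<Gamma> k x = H x + ereal (model k x)"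
  using lam_pos lam_less_1 by (intro acp_eq_add_lin_model H_not_MInf) auto

lemma model_slope: "model k z - model k x = sk k \<bullet> (z - x)"
proof (induction k)
  case 0
  then show ?case by (simp add: lin_def taa_0 inner_diff_right)
next
  case (Suc k)
  have "model (Suc k) z - model (Suc k) x
      = (1 - lam) * (model k z - model k x) + lam * (G (xt (Suc k)) \<bullet> (z - x))"
    by (simp add: lin_def algebra_simps inner_diff_right)
  then show ?case using Suc.IH by (simp add: taa_Suc(2) inner_add_left)
qed

lemma model_growth:
  assumes "z \<in> D"
  shows "Hr (xk k) + model k (xk k) + \<alpha> / 2 * (N (xk k - z))\<^sup>2 \<le> Hr z + model k z"
proof -
  have "Hr (xk k) + sk k \<bullet> xk k + \<alpha> / 2 * (N (xk k - z))\<^sup>2 \<le> Hr z + sk k \<bullet> z"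
    by (rule strongly_convex_on_minimizer_growth[OF Hr_strongly_convex xk_in_dom assms])
       (simp add: xk_eq lin_argmin_le)
  then show ?thesis using model_slope[of k z "xk k"] by (simp add: inner_diff_right)
qed

definition "model_min k = Hr (xk k) + model k (xk k)"
definition "gap k = f (yk k) + Hr (yk k) - model_min k"

lemma INF_\<Gamma>: "(INF x. \<Gamma> k x) = ereal (model_min k)"
proof (rule antisym)
  show "(INF x. \<Gamma> k x) \<le> ereal (model_min k)"
    using INF_lower[of "xk k" UNIV "\<Gamma> k"] by (simp add: \<Gamma>_eq H_real[OF xk_in_dom] model_min_def)
  show "ereal (model_min k) \<le> (INF x. \<Gamma> k x)"
  proof (rule INF_greatest)
    fix z
    show "ereal (model_min k) \<le> \<Gamma> k z"
    proof (cases "z \<in> D")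
      case True
      have "0 \<le> \<alpha> / 2 * (N (xk k - z))\<^sup>2" using \<alpha>_pos by simp
      then have "model_min k \<le> Hr z + model k z"
        using model_growth[OF True, of k] unfolding model_min_def by linarith
      then show ?thesis by (simp add: \<Gamma>_eq H_real[OF True])
    qed (simp add: \<Gamma>_eq H_outside)
  qed
qed

lemma phialpha_eq: "x \<in> D \<Longrightarrow> phialpha f h w \<alpha> x = ereal (f x + Hr x)"
  by (simp add: phialpha_def H_real)

lemma gap_0_nonneg: "0 \<le> gap 0"
proof -
  have "0 \<le> \<alpha> / 2 * (N (xk 0 - y0))\<^sup>2" using \<alpha>_pos by simp
  moreover have "model 0 y0 = f y0" by (simp add: lin_def)
  ultimately show ?thesis
    using model_growth[OF y0, of 0] unfolding gap_def model_min_def taa_0(3) by linarith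
qed

lemma gap_Suc_le: "gap (Suc k) \<le> (1 - lam) * gap k"
proof -
  define y x p x' y' where "y = yk k" and "x = xk k" and "p = xt (Suc k)"
    and "x' = xk (Suc k)" and "y' = yk (Suc k)"
  have p: "p = (1 - lam) *\<^sub>R y + lam *\<^sub>R x" and y': "y' = (1 - lam) *\<^sub>R y + lam *\<^sub>R x'"
    unfolding y_def x_def p_def x'_def y'_def by (simp_all only: taa_Suc)
  have "y' - p = lam *\<^sub>R (x' - x)" unfolding p y' by (simp add: algebra_simps)
  then have "L / 2 * (N (y' - p))\<^sup>2 = L * lam\<^sup>2 / 2 * (N (x - x'))\<^sup>2"
    using lam_pos by (simp add: is_norm_scaleR[OF N] is_norm_minus_commute[OF N, of x'] power_mult_distrib)
  \<comment> \<open>the choice of lam makes the smoothness term equal to (1 - lam) times the growth term\<close>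
  then have quad: "L / 2 * (N (y' - p))\<^sup>2 = (1 - lam) * (\<alpha> / 2 * (N (x - x'))\<^sup>2)"
    by (simp add: L_lam_sq)
  have "y' - p = (1 - lam) *\<^sub>R (y - p) + lam *\<^sub>R (x' - p)" unfolding y' by (simp add: algebra_simps)
  then have "G p \<bullet> (y' - p) = (1 - lam) * (G p \<bullet> (y - p)) + lam * (G p \<bullet> (x' - p))"
    by (simp only: inner_add_right inner_scaleR_right)
  then have split: "f p + G p \<bullet> (y' - p) = (1 - lam) * (f p + G p \<bullet> (y - p)) + lam * lin f G p x'"
    by (simp add: lin_def algebra_simps)
  have descent: "f y' \<le> f p + G p \<bullet> (y' - p) + L / 2 * (N (y' - p))\<^sup>2"
    by (rule L_smooth_quadratic_upper_bound[OF N smooth f_deriv])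
  have "(1 - lam) * (f p + G p \<bullet> (y - p)) \<le> (1 - lam) * f y"
    using convex_on_gradient_inequality[OF f_convex f_deriv] lam_less_1 by (intro mult_left_mono) auto
  moreover have "Hr y' \<le> (1 - lam) * Hr y + lam * Hr x'"
    unfolding y' y_def x'_def using \<alpha>_pos lam_pos lam_less_1
    by (intro strongly_convex_on_imp_le[OF Hr_strongly_convex] yk_in_dom xk_in_dom) auto
  moreover have "(1 - lam) * (model_min k + \<alpha> / 2 * (N (x - x'))\<^sup>2) \<le> (1 - lam) * (Hr x' + model k x')"
    using model_growth[OF xk_in_dom] lam_less_1 unfolding x_def x'_def model_min_def
    by (intro mult_left_mono) auto
  moreover have "gap (Suc k) = f y' + Hr y' - Hr x' - (1 - lam) * model k x' - lam * lin f G p x'"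
    unfolding gap_def model_min_def y'_def x'_def p_def by simp
  ultimately show ?thesis using descent quad split
    unfolding gap_def[of k] y_def[symmetric] by (simp add: algebra_simps) argo
qed

lemma gap_le_power: "gap k \<le> (1 - lam) ^ k * gap 0"
proof (induction k)
  case (Suc k)
  have "gap (Suc k) \<le> (1 - lam) * gap k" by (rule gap_Suc_le)
  also have "\<dots> \<le> (1 - lam) * ((1 - lam) ^ k * gap 0)"
    using Suc lam_less_1 by (intro mult_left_mono) auto
  finally show ?case by simp
qed simp

lemma inverse_lam_le_sqrt:
  assumes "0 < \<epsilon>" "0 < M" "\<alpha> = \<epsilon> / (2 * M)"
  shows "1 / lam \<le> 2 * (1 + sqrt (M * L / \<epsilon>))"
proof -
  have "L / \<alpha> = 2 * (M * L / \<epsilon>)" unfolding assms(3) using assms(1,2) by (simp add: field_simps)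
  then have "sqrt (L / \<alpha>) = sqrt 2 * sqrt (M * L / \<epsilon>)" by (simp only: real_sqrt_mult)
  also have "\<dots> \<le> 2 * sqrt (M * L / \<epsilon>)"
    using assms L_pos by (intro mult_right_mono) (auto simp: real_le_lsqrt)
  finally show ?thesis using inverse_lam_le by simp
qed

lemma eps_certificate_yk:
  assumes \<epsilon>: "0 < \<epsilon>" and M: "0 < M" and \<alpha>: "\<alpha> = \<epsilon> / (2 * M)"
    and k: "2 * (1 + sqrt (M * L / \<epsilon>)) * (1 + ln (1 + gap 0 / \<epsilon>)) \<le> real k"
  shows "eps_certificate f h w M \<alpha> \<epsilon> (yk k) (\<Gamma> k)"
proof -
  have "0 \<le> 1 + ln (1 + gap 0 / \<epsilon>)" using gap_0_nonneg \<epsilon> by simp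
  then have "(1 + ln (1 + gap 0 / \<epsilon>)) / lam
      \<le> 2 * (1 + sqrt (M * L / \<epsilon>)) * (1 + ln (1 + gap 0 / \<epsilon>))"
    using mult_right_mono[OF inverse_lam_le_sqrt[OF \<epsilon> M \<alpha>]] by simp
  then have steps: "(1 + ln (1 + gap 0 / \<epsilon>)) / lam \<le> real k" using k by linarith
  have "gap k \<le> \<epsilon> / 2"
    using gap_le_power[of k] geometric_decay_le_half[OF lam_pos lam_less_1 \<epsilon> steps] by linarith
  then have "phialpha f h w \<alpha> (yk k) - (INF x. \<Gamma> k x) \<le> ereal (\<epsilon> / 2)"
    by (simp add: phialpha_eq[OF yk_in_dom] INF_\<Gamma> gap_def)
  then show ?thesis unfolding eps_certificate_def using yk_in_dom \<alpha> by simp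
qed

end

theorem theorem5p1:
  shows "\<exists>C > 0. \<exists>c::nat. \<forall>(N :: 'a::euclidean_space \<Rightarrow> real) (f :: 'a \<Rightarrow> real) (G :: 'a \<Rightarrow> 'a)
      (h :: 'a \<Rightarrow> ereal) (w :: 'a \<Rightarrow> ereal) (L::real) (M::real) (\<epsilon>::real) (y0::'a) (k::nat).
    is_norm N \<and> convex_on UNIV f \<and> (\<forall>x. (f has_derivative (\<lambda>v. G x \<bullet> v)) (at x))
    \<and> L > 0 \<and> L_smooth_wrt N L G
    \<and> eclosed h \<and> eproper h \<and> econvex h \<and> bounded (edom h)
    \<and> (\<forall>x. 0 \<le> w x) \<and> eclosed w \<and> strongly_convex_wrt_on (edom h) N w
    \<and> (\<exists>x\<in>edom h. w x = ereal M) \<and> (\<forall>x\<in>edom h. w x \<le> ereal M) \<and> M > 0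
    \<and> \<epsilon> > 0 \<and> y0 \<in> edom h
    \<longrightarrow>
    (let \<alpha> = \<epsilon> / (2 * M);
         lam = 2 * \<alpha> / (\<alpha> + sqrt (\<alpha>\<^sup>2 + 4 * L * \<alpha>));
         H = halpha h w \<alpha>;
         it = taa H G lam y0;
         \<Gamma> = acp H f G y0 (\<lambda>i. fst (it (Suc i))) (\<lambda>_. lam);
         gap0 = real_of_ereal (phialpha f h w \<alpha> y0 - (INF x. \<Gamma> 0 x))
     in real k \<ge> C * (1 + sqrt (M * L / \<epsilon>)) * (1 + ln (1 + gap0 / \<epsilon>)) ^ c \<longrightarrow>
        eps_certificate f h w M \<alpha> \<epsilon> (snd (snd (snd (it k)))) (\<Gamma> k))"
proof (intro exI[of _ "2::real"] exI[of _ "1::nat"] conjI allI impI, goal_cases)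
  case (2 N f G h w L M \<epsilon> y0 k)
  define \<alpha> where "\<alpha> = \<epsilon> / (2 * M)"
  interpret taa_setting N f G h w L M \<alpha> y0
    using 2 unfolding \<alpha>_def by unfold_locales auto
  have "real_of_ereal (phialpha f h w \<alpha> y0 - (INF x. \<Gamma> 0 x)) = gap 0"
    unfolding phialpha_eq[OF y0] INF_\<Gamma> gap_def taa_0(3) by simp
  then show ?case
    using eps_certificate_yk[OF _ _ \<alpha>_def] 2
    unfolding Let_def \<alpha>_def[symmetric] lam_def[symmetric] xt_def[symmetric] yk_def[symmetric]
    by auto
qed simp

end
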